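(* Define integers $(\eta_n)_{n\geq 0}$ by \[\sum_{n\geq 0}\eta_nx^n=\frac{1-x}{\sqrt{1 - 4x + 4x^2 - 4x^3 + 4x^4}}.\] Then for all $n\geq 1$, \[\deg(\mathscr C:\mathrm{Comp}(n)\to\mathrm{Comp}(n))=\frac{\eta_n}{2^{n-1}}.\] Consequently, as $n\to\infty$, \[\deg(\mathscr C:\mathrm{Comp}(n)\to\mathrm{Comp}(n))\sim\frac{1-\rho}{\sqrt{\pi(1-3\rho+2\rho^2-\rho^3)n}}\left(\frac{1}{2\rho}\right)^n,\] where $\rho\approx 0.33933$ is the smallest positive real root of $1-4x+4x^2-4x^3+4x^4$.
   Context: For finite sets $X,Y$ and $f:X\to Y$, $\deg(f)=\frac{1}{|X|}\sum_{y\in Y}|f^{-1}(y)|^2$. $\mathrm{Comp}(n)$ is the set of compositions of $n$, i.e. tuples $(c_1,\dots,c_\ell)$ of positive integers summing to $n$. Carolina solitaire $\mathscr C:\mathrm{Comp}(n)\to\mathrm{Comp}(n)$ sends $c=(c_1,\ldots,c_\ell)$ to the composition obtained by deleting all zeros from the tuple $(\ell,c_1-1,\ldots,c_\ell-1)$ (keeping the order). For example, $\mathscr C(3,1,3,7,1,8)=(6,2,2,6,7)$. *)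

theory Defs
  imports "HOL-Analysis.Analysis" "HOL-Computational_Algebra.Formal_Power_Series"
    "HOL-Library.Landau_Symbols"
begin

definition map_deg :: "('a \<Rightarrow> 'b) \<Rightarrow> 'a set \<Rightarrow> 'b set \<Rightarrow> real" where
  "map_deg f X Y = (\<Sum>y\<in>Y. real (card {x\<in>X. f x = y}) ^ 2) / real (card X)"

definition Comp :: "nat \<Rightarrow> nat list set" where
  "Comp n = {c. (\<forall>x\<in>set c. 0 < x) \<and> sum_list c = n}"

definition carolina :: "nat list \<Rightarrow> nat list" where
  "carolina c = filter (\<lambda>x. x \<noteq> 0) (length c # map (\<lambda>x. x - 1) c)"

definition quartic :: "real \<Rightarrow> real" where
  "quartic x = 1 - 4*x + 4*x^2 - 4*x^3 + 4*x^4"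

definition quartic_fps :: "real fps" where
  "quartic_fps = 1 - 4 * fps_X + 4 * fps_X^2 - 4 * fps_X^3 + 4 * fps_X^4"

text \<open>Generating function (1-x)/sqrt(quartic), with the square root normalised to have
  constant term 1.\<close>
definition eta_fps :: "real fps" where
  "eta_fps = (1 - fps_X) * inverse (fps_radical (\<lambda>k x. root k x) 2 quartic_fps)"

definition eta :: "nat \<Rightarrow> real" where
  "eta n = fps_nth eta_fps n"

end

theory Submission
  imports Defs
begin

(* The fibre of Carolina solitaire over a composition (l, d) of n consists of the compositions
   with l parts whose parts, decreased by one and with zeros deleted, give d; it has
   (l choose length d) elements. Counting compositions by their number of parts with the series
   x/(1 - x) turns the sum of squared fibre sizes into the coefficient of x^n in
   F(x, x/(1 - x)), where F(t, z) = sum_l sum_m (l choose m)^2 z^m t^l. The three-term recursion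
   of Legendre polynomials gives F(t, z) = (1 - 2(1 + z) t + (1 - z)^2 t^2)^(-1/2), and the
   substitution produces (1 - x)/sqrt(quartic x).

   For the asymptotics, factor quartic x = (1 - x/rho) G(x) with a cubic G. Then
   eta(x) = (1 - x/rho)^(-1/2) h(x) with h = (1 - x)/sqrt G, and a majorant argument on the
   differential equation of 1/sqrt G shows that h converges on a disc of radius 0.39 > rho.
   Hence eta_n rho^n ~ h(rho) [x^n](1 - x)^(-1/2) ~ h(rho)/sqrt(pi n), and
   h(rho) = (1 - rho)/(2 sqrt(1 - 3 rho + 2 rho^2 - rho^3)). *)

unbundle no vec_syntax
unbundle fps_syntax

section \<open>Compositions and the fibres of Carolina solitaire\<close>

lemma length_le_sum_list_pos: "\<forall>x\<in>set c. 0 < (x::nat) \<Longrightarrow> length c \<le> sum_list c"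
  by (induction c) auto

lemma finite_Comp: "finite (Comp n)"
proof (rule finite_subset)
  show "Comp n \<subseteq> {xs. set xs \<subseteq> {0..n} \<and> length xs \<le> n}"
  proof
    fix c assume "c \<in> Comp n"
    then have "\<forall>x\<in>set c. 0 < x" and "sum_list c = n" by (auto simp: Comp_def)
    then show "c \<in> {xs. set xs \<subseteq> {0..n} \<and> length xs \<le> n}"
      using length_le_sum_list_pos[of c] member_le_sum_list[of _ c] by auto
  qed
qed (rule finite_lists_length_le, simp)

lemma Comp_0: "Comp 0 = {[]}"
proof -
  have "c = []" if "c \<in> Comp 0" for c
    using that by (cases c) (auto simp: Comp_def)
  then show ?thesis by (auto simp: Comp_def)
qed

lemma Comp_eq_UN_Cons:
  assumes "n \<ge> 1"
  shows "Comp n = (\<Union>j\<in>{1..n}. (#) j ` Comp (n - j))"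
proof (intro equalityI subsetI)
  fix c assume c: "c \<in> Comp n"
  with assms obtain j d where "c = j # d" by (cases c) (auto simp: Comp_def)
  with c have "j \<in> {1..n}" "d \<in> Comp (n - j)" by (auto simp: Comp_def)
  with \<open>c = j # d\<close> show "c \<in> (\<Union>j\<in>{1..n}. (#) j ` Comp (n - j))" by blast
qed (auto simp: Comp_def)

lemma card_Comp_eq_sum:
  assumes "n \<ge> 1"
  shows "card (Comp n) = (\<Sum>k<n. card (Comp k))"
proof -
  have "card (Comp n) = (\<Sum>j\<in>{1..n}. card ((#) j ` Comp (n - j)))"
    unfolding Comp_eq_UN_Cons[OF assms] by (rule card_UN_disjoint) (auto intro: finite_Comp)
  also have "\<dots> = (\<Sum>j\<in>{1..n}. card (Comp (n - j)))"
    by (intro sum.cong refl card_image) auto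
  also have "\<dots> = (\<Sum>k<n. card (Comp k))"
    by (rule sum.reindex_bij_witness[of _ "\<lambda>k. n - k" "\<lambda>j. n - j"]) auto
  finally show ?thesis .
qed

lemma card_Comp: "n \<ge> 1 \<Longrightarrow> card (Comp n) = 2 ^ (n - 1)"
proof (induction n rule: nat_induct_at_least)
  case base
  show ?case using card_Comp_eq_sum[of 1] by (simp add: Comp_0)
next
  case (Suc n)
  have "card (Comp (Suc n)) = card (Comp n) + (\<Sum>k<n. card (Comp k))"
    using card_Comp_eq_sum[of "Suc n"] by simp
  also have "\<dots> = 2 * card (Comp n)" using card_Comp_eq_sum[OF Suc.hyps(1)] by simp
  finally show ?case using Suc by (cases n) auto
qed

definition part_fps :: "real fps" where
  "part_fps = Abs_fps (\<lambda>n. if n = 0 then 0 else 1)"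

lemma part_fps_nth_0 [simp]: "part_fps $ 0 = 0"
  by (simp add: part_fps_def)

lemma part_fps_mult_one_minus_X: "part_fps * (1 - fps_X) = fps_X"
proof (rule fps_ext)
  fix n
  have "part_fps * (1 - fps_X) = part_fps - fps_X * part_fps" by (simp add: algebra_simps)
  then show "(part_fps * (1 - fps_X)) $ n = fps_X $ n"
    by (cases n) (auto simp: part_fps_def fps_X_mult_nth fps_X_nth)
qed

lemma card_Comp_length: "real (card {d \<in> Comp s. length d = i}) = (part_fps ^ i) $ s"
proof (induction i arbitrary: s)
  case 0
  have "{d \<in> Comp s. length d = 0} = (if s = 0 then {[]} else {})"
    by (auto simp: Comp_def)
  then show ?case by simp
next
  case (Suc i)
  show ?case
  proof (cases "s = 0")
    case True
    then show ?thesis by (simp add: Comp_0)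
  next
    case False
    have "{d \<in> Comp s. length d = Suc i} = (\<Union>j\<in>{1..s}. (#) j ` {d \<in> Comp (s - j). length d = i})"
      using Comp_eq_UN_Cons[of s] False by auto
    then have "card {d \<in> Comp s. length d = Suc i} =
        (\<Sum>j\<in>{1..s}. card ((#) j ` {d \<in> Comp (s - j). length d = i}))"
      by (simp only:) (rule card_UN_disjoint, auto simp: finite_Comp)
    also have "\<dots> = (\<Sum>j\<in>{1..s}. card {d \<in> Comp (s - j). length d = i})"
      by (intro sum.cong refl card_image) auto
    finally have "real (card {d \<in> Comp s. length d = Suc i}) = (\<Sum>j\<in>{1..s}. (part_fps ^ i) $ (s - j))"
      using Suc by simp
    also have "\<dots> = (\<Sum>j=0..s. part_fps $ j * (part_fps ^ i) $ (s - j))"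
      by (subst sum.atLeast_Suc_atMost) (auto simp: part_fps_def intro!: sum.cong)
    also have "\<dots> = (part_fps ^ Suc i) $ s" by (simp add: fps_mult_nth)
    finally show ?thesis .
  qed
qed

lemma lists_filter_nonzero_Suc_Nil:
  "{e. length e = Suc l \<and> filter (\<lambda>x. x \<noteq> (0::nat)) e = []} =
     (#) 0 ` {e. length e = l \<and> filter (\<lambda>x. x \<noteq> 0) e = []}"
proof (intro equalityI subsetI)
  fix e assume "e \<in> {e. length e = Suc l \<and> filter (\<lambda>x. x \<noteq> (0::nat)) e = []}"
  then show "e \<in> (#) 0 ` {e. length e = l \<and> filter (\<lambda>x. x \<noteq> 0) e = []}"
    by (cases e) (auto split: if_splits)
qed auto

lemma lists_filter_nonzero_Suc_Cons:
  assumes "b \<noteq> 0"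
  shows "{e. length e = Suc l \<and> filter (\<lambda>x. x \<noteq> (0::nat)) e = b # d} =
     (#) 0 ` {e. length e = l \<and> filter (\<lambda>x. x \<noteq> 0) e = b # d} \<union>
     (#) b ` {e. length e = l \<and> filter (\<lambda>x. x \<noteq> 0) e = d}"
proof (intro equalityI subsetI)
  fix e assume "e \<in> {e. length e = Suc l \<and> filter (\<lambda>x. x \<noteq> (0::nat)) e = b # d}"
  then show "e \<in> (#) 0 ` {e. length e = l \<and> filter (\<lambda>x. x \<noteq> 0) e = b # d} \<union>
     (#) b ` {e. length e = l \<and> filter (\<lambda>x. x \<noteq> 0) e = d}"
    by (cases e) (auto split: if_splits)
qed (use assms in auto)

lemma finite_lists_filter_nonzero: "finite {e. length e = l \<and> filter (\<lambda>x. x \<noteq> (0::nat)) e = d}"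
proof (rule finite_subset)
  show "{e. length e = l \<and> filter (\<lambda>x. x \<noteq> 0) e = d} \<subseteq> {xs. set xs \<subseteq> insert 0 (set d) \<and> length xs = l}"
    by auto
qed (rule finite_lists_length_eq, simp)

lemma card_lists_filter_nonzero:
  assumes "0 \<notin> set d"
  shows "card {e. length e = l \<and> filter (\<lambda>x. x \<noteq> (0::nat)) e = d} = l choose length d"
  using assms
proof (induction l arbitrary: d)
  case 0
  have "{e. length e = 0 \<and> filter (\<lambda>x. x \<noteq> 0) e = d} = (if d = [] then {[]} else {})"
    by auto
  then show ?case by simp
next
  case (Suc l)
  show ?case
  proof (cases d)
    case Nil
    then show ?thesis
      unfolding Nil lists_filter_nonzero_Suc_Nil using Suc by (simp add: card_image)
  next
    case (Cons b d')
    then have "b \<noteq> 0" using Suc.prems by auto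
    then have "card {e. length e = Suc l \<and> filter (\<lambda>x. x \<noteq> 0) e = d} =
        card {e. length e = l \<and> filter (\<lambda>x. x \<noteq> 0) e = d}
        + card {e. length e = l \<and> filter (\<lambda>x. x \<noteq> 0) e = d'}"
      unfolding Cons lists_filter_nonzero_Suc_Cons[OF \<open>b \<noteq> 0\<close>]
      using finite_lists_filter_nonzero[of l] by (subst card_Un_disjoint) (auto simp: card_image)
    then show ?thesis using Suc Cons by simp
  qed
qed

lemma sum_list_map_pred: "\<forall>x\<in>set c. 0 < (x::nat) \<Longrightarrow> sum_list c = length c + sum_list (map (\<lambda>x. x - 1) c)"
  by (induction c) auto

lemma sum_list_filter_nonzero: "sum_list (filter (\<lambda>x. x \<noteq> (0::nat)) e) = sum_list e"
  by (induction e) auto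

lemma carolina_fibre_eq_image:
  assumes "n \<ge> 1" and "l # d \<in> Comp n"
  shows "{c \<in> Comp n. carolina c = l # d} = map Suc ` {e. length e = l \<and> filter (\<lambda>x. x \<noteq> 0) e = d}"
proof (intro equalityI subsetI)
  fix c assume c: "c \<in> {c \<in> Comp n. carolina c = l # d}"
  then have pos: "\<forall>x\<in>set c. 0 < x" and "sum_list c = n" by (auto simp: Comp_def)
  with assms obtain a c' where "c = a # c'" by (cases c) auto
  with c have "length c = l" "filter (\<lambda>x. x \<noteq> 0) (map (\<lambda>x. x - 1) c) = d"
    by (simp_all add: carolina_def)
  moreover have "c = map Suc (map (\<lambda>x. x - 1) c)" using pos by (induction c) auto
  ultimately show "c \<in> map Suc ` {e. length e = l \<and> filter (\<lambda>x. x \<noteq> 0) e = d}"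
    by (metis (mono_tags, lifting) image_eqI length_map mem_Collect_eq)
next
  fix c assume "c \<in> map Suc ` {e. length e = l \<and> filter (\<lambda>x. x \<noteq> 0) e = d}"
  then obtain e where c: "c = map Suc e" and e: "length e = l" "filter (\<lambda>x. x \<noteq> 0) e = d"
    by auto
  have "sum_list c = l + sum_list d"
    using c e by (simp add: sum_list_map_pred sum_list_filter_nonzero[of e, symmetric] comp_def)
  with assms(2) have "c \<in> Comp n" and "l \<noteq> 0" using c by (auto simp: Comp_def)
  moreover have "map (\<lambda>x. x - 1) c = e" using c by (simp add: comp_def)
  then have "carolina c = l # d" using c e \<open>l \<noteq> 0\<close> by (simp add: carolina_def)
  ultimately show "c \<in> {c \<in> Comp n. carolina c = l # d}" by simp
qed

lemma card_carolina_fibre: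
  assumes "n \<ge> 1" and "l # d \<in> Comp n"
  shows "card {c \<in> Comp n. carolina c = l # d} = l choose length d"
proof -
  have "0 \<notin> set d" using assms(2) by (auto simp: Comp_def)
  have "inj_on (map Suc) A" for A :: "nat list set" by (simp add: inj_on_def)
  then have "card {c \<in> Comp n. carolina c = l # d} = card {e. length e = l \<and> filter (\<lambda>x. x \<noteq> 0) e = d}"
    unfolding carolina_fibre_eq_image[OF assms] by (rule card_image)
  also have "\<dots> = l choose length d" by (rule card_lists_filter_nonzero) fact
  finally show ?thesis .
qed

section \<open>Squared binomial coefficients and the Legendre generating function\<close>

lemma choose_pred_mult: "real n * real ((n - 1) choose k) = (real n - real k) * real (n choose k)"
proof (cases "k \<le> n")
  case True
  have "real ((n - k) * (n choose k)) = real (n * ((n - 1) choose k))"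
    by (simp only: binomial_absorb_comp)
  with True show ?thesis by (simp add: of_nat_diff)
next
  case False
  then show ?thesis by (simp add: binomial_eq_0)
qed

lemma Suc_mult_choose_Suc: "real (Suc k) * real (n choose Suc k) = real n * real ((n - 1) choose k)"
  by (metis binomial_absorption of_nat_mult)

lemma legendre_coeff_identity:
  fixes p q a b c d e f :: real
  assumes "0 < p"
    and b: "(p + 1) * b = (p + 1 - q) * a" and c: "(p + 1) * c = q * a"
    and d: "p * d = (p - q) * b" and e: "p * e = q * b" and f: "p * f = (q - 1) * c"
  shows "(p + 1) * a^2 = (2 * p + 1) * (b^2 + c^2) - p * (d^2 - 2 * e^2 + f^2)"
proof -
  \<comment> \<open>every coefficient is a rational multiple of \<open>a\<close>; clear the denominators \<open>p (p + 1)\<close>\<close>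
  have "((p + 1) * p * d)^2 = ((p - q) * (p + 1 - q) * a)^2"
    using b d by (metis mult.commute mult.left_commute)
  moreover have "((p + 1) * p * e)^2 = (q * (p + 1 - q) * a)^2"
    using b e by (metis mult.commute mult.left_commute)
  moreover have "((p + 1) * p * f)^2 = ((q - 1) * q * a)^2"
    using c f by (metis mult.commute mult.left_commute)
  moreover have "((p + 1) * b)^2 = ((p + 1 - q) * a)^2" "((p + 1) * c)^2 = (q * a)^2"
    using b c by simp_all
  ultimately have "((p + 1) * p)^2 * ((p + 1) * a^2) =
      ((p + 1) * p)^2 * ((2 * p + 1) * (b^2 + c^2) - p * (d^2 - 2 * e^2 + f^2))"
    by algebra
  then show ?thesis using assms(1) by simp
qed

definition binom_sq_poly :: "nat \<Rightarrow> real fps" where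
  "binom_sq_poly l = Abs_fps (\<lambda>m. real (l choose m)^2)"

text \<open>\<open>binom_sq_poly N (z) = (1 - z)^N P\<^sub>N((1 + z)/(1 - z))\<close> for the Legendre polynomial
  \<open>P\<^sub>N\<close>, so Bonnet's recursion for \<open>P\<^sub>N\<close> becomes the following.\<close>
lemma binom_sq_poly_recurrence:
  assumes "N \<ge> 1"
  shows "of_nat (N + 1) * binom_sq_poly (N + 1) =
    of_nat (2 * N + 1) * (1 + fps_X) * binom_sq_poly N
    - of_nat N * (1 - fps_X)^2 * binom_sq_poly (N - 1)"
proof -
  have "fps_const (real (N + 1)) * binom_sq_poly (N + 1) =
    fps_const (real (2 * N + 1)) * ((1 + fps_X) * binom_sq_poly N)
    - fps_const (real N) * ((1 - fps_X)^2 * binom_sq_poly (N - 1))"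
  proof (rule fps_ext)
    fix m
    define p q where "p = real N" and "q = real m"
    define a b c where "a = real ((N + 1) choose m)" and "b = real (N choose m)"
      and "c = (if m = 0 then 0 else real (N choose (m - 1)))"
    define d e f where "d = real ((N - 1) choose m)"
      and "e = (if m = 0 then 0 else real ((N - 1) choose (m - 1)))"
      and "f = (if m \<le> 1 then 0 else real ((N - 1) choose (m - 2)))"
    have "(p + 1) * a^2 = (2 * p + 1) * (b^2 + c^2) - p * (d^2 - 2 * e^2 + f^2)"
    proof (rule legendre_coeff_identity)
      show "0 < p" using assms by (simp add: p_def)
      show "(p + 1) * b = (p + 1 - q) * a"
        using choose_pred_mult[of "N + 1" m] by (simp add: a_def b_def p_def q_def add.commute)
      show "(p + 1) * c = q * a"
        using Suc_mult_choose_Suc[of "m - 1" "N + 1"]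
        by (cases m) (simp_all add: a_def c_def p_def q_def add.commute)
      show "p * d = (p - q) * b"
        using choose_pred_mult[of N m] by (simp add: d_def b_def p_def q_def)
      show "p * e = q * b"
        using Suc_mult_choose_Suc[of "m - 1" N] by (cases m) (simp_all add: b_def e_def p_def q_def)
      show "p * f = (q - 1) * c"
        using Suc_mult_choose_Suc[of "m - 2" N]
        by (cases m; cases "m - 1") (simp_all add: f_def c_def p_def q_def)
    qed
    then show "(fps_const (real (N + 1)) * binom_sq_poly (N + 1)) $ m =
      (fps_const (real (2 * N + 1)) * ((1 + fps_X) * binom_sq_poly N)
        - fps_const (real N) * ((1 - fps_X)^2 * binom_sq_poly (N - 1))) $ m"
      by (simp add: binom_sq_poly_def a_def b_def c_def d_def e_def f_def p_def q_def
          power2_eq_square algebra_simps fps_X_power_mult_nth numeral_2_eq_2 split: if_splits)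
  qed
  then show ?thesis unfolding fps_of_nat by (simp only: mult.assoc)
qed

definition binom_sq_gf :: "real fps fps" where
  "binom_sq_gf = Abs_fps binom_sq_poly"

definition binom_sq_gf_denom :: "real fps fps" where
  "binom_sq_gf_denom = 1 - 2 * fps_const (1 + fps_X) * fps_X + fps_const ((1 - fps_X)^2) * fps_X^2"

lemma binom_sq_poly_0: "binom_sq_poly 0 = 1"
  by (simp add: binom_sq_poly_def fps_eq_iff)

lemma binom_sq_poly_1: "binom_sq_poly (Suc 0) = 1 + fps_X"
  by (auto simp add: binom_sq_poly_def fps_eq_iff binomial_eq_0)

lemma binom_sq_gf_deriv:
  "binom_sq_gf_denom * fps_deriv binom_sq_gf =
     (fps_const (1 + fps_X) - fps_const ((1 - fps_X)^2) * fps_X) * binom_sq_gf"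
proof (rule fps_ext)
  fix l
  define w v :: "real fps" where "w = 1 + fps_X" and "v = (1 - fps_X)^2"
  have lhs: "binom_sq_gf_denom * fps_deriv binom_sq_gf = fps_deriv binom_sq_gf
      - fps_const (2 * w) * (fps_X * fps_deriv binom_sq_gf)
      + fps_const v * (fps_X^2 * fps_deriv binom_sq_gf)"
    by (simp add: binom_sq_gf_denom_def w_def v_def algebra_simps flip: fps_const_mult)
  have rhs: "(fps_const w - fps_const v * fps_X) * binom_sq_gf =
      fps_const w * binom_sq_gf - fps_const v * (fps_X * binom_sq_gf)"
    by (simp add: algebra_simps)
  show "(binom_sq_gf_denom * fps_deriv binom_sq_gf) $ l =
      ((fps_const (1 + fps_X) - fps_const ((1 - fps_X)^2) * fps_X) * binom_sq_gf) $ l"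
  proof (cases l)
    case 0
    then show ?thesis unfolding lhs rhs[unfolded w_def v_def]
      by (simp add: binom_sq_gf_def binom_sq_poly_0 binom_sq_poly_1 w_def)
  next
    case (Suc N)
    have "(binom_sq_gf_denom * fps_deriv binom_sq_gf) $ l = of_nat (N + 2) * binom_sq_poly (N + 2)
        - 2 * w * of_nat (N + 1) * binom_sq_poly (N + 1) + v * of_nat N * binom_sq_poly N"
      unfolding lhs using Suc
      by (cases N) (simp_all add: binom_sq_gf_def fps_X_power_mult_nth numeral_2_eq_2 algebra_simps)
    also have "\<dots> = w * binom_sq_poly (N + 1) - v * binom_sq_poly N"
      using binom_sq_poly_recurrence[of "N + 1"]
      by (simp add: w_def v_def numeral_2_eq_2 algebra_simps)
    also have "\<dots> = ((fps_const (1 + fps_X) - fps_const ((1 - fps_X)^2) * fps_X) * binom_sq_gf) $ l"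
      unfolding rhs[unfolded w_def v_def] using Suc by (simp add: binom_sq_gf_def w_def v_def)
    finally show ?thesis .
  qed
qed

lemma binom_sq_gf_squared: "binom_sq_gf^2 * binom_sq_gf_denom = 1"
proof -
  have denom_deriv: "fps_deriv binom_sq_gf_denom =
      - 2 * (fps_const (1 + fps_X) - fps_const ((1 - fps_X)^2) * fps_X)"
    by (simp add: binom_sq_gf_denom_def fps_deriv_power algebra_simps numeral_2_eq_2)
  have "fps_deriv (binom_sq_gf^2 * binom_sq_gf_denom) =
      2 * binom_sq_gf * (binom_sq_gf_denom * fps_deriv binom_sq_gf)
      + binom_sq_gf^2 * fps_deriv binom_sq_gf_denom"
    by (simp add: power2_eq_square algebra_simps)
  also have "\<dots> = 0"
    unfolding binom_sq_gf_deriv denom_deriv by (simp add: power2_eq_square algebra_simps)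
  finally have "binom_sq_gf^2 * binom_sq_gf_denom = fps_const ((binom_sq_gf^2 * binom_sq_gf_denom) $ 0)"
    by (rule fps_deriv_eq_0_iff[THEN iffD1])
  also have "(binom_sq_gf^2 * binom_sq_gf_denom) $ 0 = 1"
    by (simp add: binom_sq_gf_def binom_sq_gf_denom_def binom_sq_poly_0 power2_eq_square)
  finally show ?thesis by simp
qed

section \<open>Substitution into bivariate power series\<close>

text \<open>A series \<open>F :: 'a fps fps\<close> is read as \<open>F(t, x) = \<Sum>\<^sub>l (F $ l)(x) t\<^sup>l\<close>; then \<open>fps_diag F\<close>
  is \<open>F(x, x)\<close> and \<open>fps_compose_inner F g\<close> is \<open>F(t, g(x))\<close>.\<close>
definition fps_diag :: "'a::comm_ring_1 fps fps \<Rightarrow> 'a fps" where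
  "fps_diag F = Abs_fps (\<lambda>n. \<Sum>l\<le>n. F $ l $ (n - l))"

definition fps_compose_inner :: "'a::idom fps fps \<Rightarrow> 'a fps \<Rightarrow> 'a fps fps" where
  "fps_compose_inner F g = Abs_fps (\<lambda>l. F $ l oo g)"

lemma fps_diag_add: "fps_diag (F + G) = fps_diag F + fps_diag G"
  by (simp add: fps_diag_def fps_eq_iff sum.distrib)

lemma fps_diag_diff: "fps_diag (F - G) = fps_diag F - fps_diag G"
  by (simp add: fps_diag_def fps_eq_iff sum_subtractf)

lemma fps_diag_const: "fps_diag (fps_const a) = a"
proof (rule fps_ext)
  fix n
  have "(\<Sum>l\<le>n. fps_const a $ l $ (n - l)) = (\<Sum>l\<le>n. if l = 0 then a $ n else 0)"
    by (intro sum.cong) auto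
  then show "fps_diag (fps_const a) $ n = a $ n" by (simp add: fps_diag_def)
qed

lemma fps_diag_1: "fps_diag 1 = 1"
  using fps_diag_const[of 1] by simp

lemma fps_diag_X: "fps_diag fps_X = fps_X"
proof (rule fps_ext)
  fix n
  have "(\<Sum>l\<le>n. (fps_X :: 'a fps fps) $ l $ (n - l)) = (\<Sum>l\<le>n. if l = 1 \<and> n = 1 then 1 else 0)"
    by (intro sum.cong) (auto simp: fps_X_def)
  then show "fps_diag fps_X $ n = (fps_X :: 'a fps) $ n"
    by (auto simp: fps_diag_def fps_X_def)
qed

lemma fps_diag_mult: "fps_diag (F * G) = fps_diag F * fps_diag G"
proof (rule fps_ext)
  fix n
  \<comment> \<open>the truncation \<open>T F = \<Sum>\<^sub>l\<^sub>\<le>\<^sub>n x\<^sup>l F\<^sub>l\<close> agrees with \<open>fps_diag F\<close> up to degree \<open>n\<close> and is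
    an honest finite sum, so it can be multiplied out\<close>
  define T where "T F = (\<Sum>l\<le>n. fps_X^l * F $ l)" for F :: "'a fps fps"
  have T_nth: "T F $ m = fps_diag F $ m" if "m \<le> n" for F m
  proof -
    have "T F $ m = (\<Sum>l\<le>n. if m < l then 0 else F $ l $ (m - l))"
      by (simp add: T_def fps_sum_nth fps_X_power_mult_nth)
    also have "\<dots> = (\<Sum>l\<le>m. F $ l $ (m - l))"
      using that by (intro sum.mono_neutral_cong_right) auto
    finally show ?thesis by (simp add: fps_diag_def)
  qed
  define h where "h i j = (fps_X^(i + j) * (F $ i * G $ j)) $ n" for i j
  have h0: "h i j = 0" if "n < i + j" for i j
    using that by (simp add: h_def fps_X_power_mult_nth)
  have "fps_diag (F * G) $ n = T (F * G) $ n" by (simp add: T_nth)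
  also have "\<dots> = (\<Sum>l\<le>n. \<Sum>i\<le>l. h i (l - i))"
    by (simp add: T_def fps_sum_nth fps_mult_nth h_def sum_distrib_left atLeast0AtMost)
  also have "\<dots> = (\<Sum>(i, j)\<in>{(i, j). i + j \<le> n}. h i j)"
    by (rule sum.triangle_reindex_eq[symmetric])
  also have "\<dots> = (\<Sum>(i, j)\<in>{..n} \<times> {..n}. h i j)"
    by (intro sum.mono_neutral_left) (auto intro: h0)
  also have "\<dots> = (T F * T G) $ n"
    by (simp add: sum.cartesian_product[symmetric] T_def sum_product fps_sum_nth h_def power_add mult_ac)
  also have "\<dots> = (fps_diag F * fps_diag G) $ n"
    by (simp add: fps_mult_nth T_nth)
  finally show "fps_diag (F * G) $ n = (fps_diag F * fps_diag G) $ n" .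
qed

lemma fps_diag_power: "fps_diag (F ^ k) = fps_diag F ^ k"
  by (induction k) (simp_all add: fps_diag_1 fps_diag_mult)

lemma fps_compose_inner_add:
  "fps_compose_inner (F + G) g = fps_compose_inner F g + fps_compose_inner G g"
  by (simp add: fps_compose_inner_def fps_eq_iff fps_compose_add_distrib)

lemma fps_compose_inner_diff:
  "fps_compose_inner (F - G) g = fps_compose_inner F g - fps_compose_inner G g"
  by (simp add: fps_compose_inner_def fps_eq_iff fps_compose_sub_distrib)

lemma fps_compose_inner_mult:
  "g $ 0 = 0 \<Longrightarrow> fps_compose_inner (F * G) g = fps_compose_inner F g * fps_compose_inner G g"
  by (simp add: fps_compose_inner_def fps_eq_iff fps_mult_nth fps_compose_sum_distrib
      fps_compose_mult_distrib)

lemma fps_compose_inner_1: "fps_compose_inner 1 g = 1"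
  by (simp add: fps_compose_inner_def fps_eq_iff)

lemma fps_compose_inner_power:
  "g $ 0 = 0 \<Longrightarrow> fps_compose_inner (F ^ k) g = fps_compose_inner F g ^ k"
  by (induction k) (simp_all add: fps_compose_inner_mult fps_compose_inner_1)

lemma fps_compose_inner_const: "fps_compose_inner (fps_const a) g = fps_const (a oo g)"
  by (simp add: fps_compose_inner_def fps_eq_iff)

lemma fps_compose_inner_X: "fps_compose_inner fps_X g = fps_X"
  by (auto simp add: fps_compose_inner_def fps_eq_iff fps_X_def)

section \<open>The generating function of the fibre sizes\<close>

lemma diag_binom_sq_gf_squared:
  "fps_diag (fps_compose_inner binom_sq_gf part_fps)^2 * quartic_fps = (1 - fps_X)^2"
proof -
  define s where "s F = fps_diag (fps_compose_inner F part_fps)" for F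
  have hom: "s (F * G) = s F * s G" "s (F + G) = s F + s G" "s (F - G) = s F - s G"
    "s (F ^ k) = s F ^ k" "s (fps_const a) = a oo part_fps" "s fps_X = fps_X" "s 1 = 1" for F G k a
    by (simp_all add: s_def fps_compose_inner_mult fps_compose_inner_add fps_compose_inner_diff
        fps_compose_inner_power fps_compose_inner_const fps_compose_inner_X fps_compose_inner_1
        fps_diag_mult fps_diag_add fps_diag_diff fps_diag_power fps_diag_const fps_diag_X fps_diag_1)
  have "s binom_sq_gf^2 * s binom_sq_gf_denom = s (binom_sq_gf^2 * binom_sq_gf_denom)"
    by (simp only: hom)
  also have "\<dots> = 1"
    by (simp add: binom_sq_gf_squared hom)
  finally have P_denom: "s binom_sq_gf^2 * s binom_sq_gf_denom = 1" .
  define e :: "real fps" where "e = 1 - fps_X"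
  have pe: "part_fps * e = fps_X"
    using part_fps_mult_one_minus_X by (simp add: e_def)
  have denom: "s binom_sq_gf_denom = 1 - 2 * (1 + part_fps) * fps_X + (1 - part_fps)^2 * fps_X^2"
    unfolding binom_sq_gf_denom_def
    by (simp only: hom fps_numeral_fps_const) (simp add: fps_compose_add_distrib
        fps_compose_sub_distrib fps_compose_mult_distrib power2_eq_square flip: fps_numeral_fps_const)
  have "e^2 * s binom_sq_gf_denom = e^2 - 2 * fps_X * e^2 - 2 * fps_X * (part_fps * e) * e
      + fps_X^2 * e^2 - 2 * fps_X^2 * (part_fps * e) * e + fps_X^2 * (part_fps * e)^2"
    unfolding denom by (simp add: algebra_simps power2_eq_square)
  also have "\<dots> = quartic_fps"
    unfolding pe unfolding quartic_fps_def e_def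
    by (simp add: algebra_simps power2_eq_square power3_eq_cube power4_eq_xxxx)
  finally have "e^2 * s binom_sq_gf_denom = quartic_fps" .
  then show ?thesis
    using P_denom unfolding s_def by (metis e_def mult.commute mult.left_commute mult.right_neutral)
qed

lemma quartic_fps_radical:
  "fps_radical (\<lambda>k x. root k x) 2 quartic_fps ^ 2 = quartic_fps"
  "fps_radical (\<lambda>k x. root k x) 2 quartic_fps $ 0 = 1"
proof -
  have "quartic_fps $ 0 = 1" by (simp add: quartic_fps_def)
  then show "fps_radical (\<lambda>k x. root k x) 2 quartic_fps ^ 2 = quartic_fps"
    using power_radical[of quartic_fps "\<lambda>k x. root k x" 1] by (simp add: numeral_2_eq_2)
  show "fps_radical (\<lambda>k x. root k x) 2 quartic_fps $ 0 = 1"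
    by (simp add: quartic_fps_def)
qed

lemma eta_fps_eq_diag: "eta_fps = fps_diag (fps_compose_inner binom_sq_gf part_fps)"
proof -
  define R where "R = fps_radical (\<lambda>k x. root k x) 2 quartic_fps"
  define P where "P = fps_diag (fps_compose_inner binom_sq_gf part_fps)"
  have "P $ 0 = 1"
    by (simp add: P_def fps_diag_def fps_compose_inner_def binom_sq_gf_def binom_sq_poly_0)
  then have "(P * R + (1 - fps_X)) $ 0 \<noteq> 0"
    using quartic_fps_radical(2) by (simp add: R_def)
  then have "P * R + (1 - fps_X) \<noteq> 0" by (metis fps_zero_nth)
  moreover have "(P * R - (1 - fps_X)) * (P * R + (1 - fps_X)) = 0"
    using diag_binom_sq_gf_squared quartic_fps_radical(1)
    by (simp add: P_def R_def power_mult_distrib algebra_simps power2_eq_square)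
  ultimately have PR: "P * R = 1 - fps_X"
    by simp
  have "eta_fps = (1 - fps_X) * inverse R"
    by (simp add: eta_fps_def R_def)
  also have "\<dots> = P * (R * inverse R)"
    by (simp add: PR[symmetric] mult.assoc)
  also have "\<dots> = P"
    using inverse_mult_eq_1'[of R] quartic_fps_radical(2) by (simp add: R_def)
  finally show ?thesis by (simp add: P_def)
qed

lemma eta_eq_sum: "eta n = (\<Sum>l\<le>n. (binom_sq_poly l oo part_fps) $ (n - l))"
  by (simp add: eta_def eta_fps_eq_diag fps_diag_def fps_compose_inner_def binom_sq_gf_def)

lemma sum_binom_sq_length_Comp:
  "(\<Sum>d\<in>Comp s. real (l choose length d)^2) = (binom_sq_poly l oo part_fps) $ s"
proof -
  have "(\<Sum>d\<in>Comp s. real (l choose length d)^2) =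
      (\<Sum>i\<in>{0..s}. \<Sum>d\<in>{d\<in>Comp s. length d = i}. real (l choose length d)^2)"
  proof (rule sum.group[symmetric])
    show "length ` Comp s \<subseteq> {0..s}"
      using length_le_sum_list_pos by (auto simp: Comp_def)
  qed (simp_all add: finite_Comp)
  also have "\<dots> = (\<Sum>i=0..s. binom_sq_poly l $ i * (part_fps ^ i) $ s)"
    by (simp add: card_Comp_length binom_sq_poly_def mult.commute)
  also have "\<dots> = (binom_sq_poly l oo part_fps) $ s"
    by (simp add: fps_compose_nth)
  finally show ?thesis .
qed

lemma eta_nonneg: "0 \<le> eta n"
  unfolding eta_eq_sum sum_binom_sq_length_Comp[symmetric] by (intro sum_nonneg) simp

lemma sum_sq_card_carolina_fibres:
  assumes "n \<ge> 1"
  shows "(\<Sum>y\<in>Comp n. real (card {c \<in> Comp n. carolina c = y})^2) = eta n"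
proof -
  have "(\<Sum>y\<in>Comp n. real (card {c \<in> Comp n. carolina c = y})^2) =
      (\<Sum>l\<in>{1..n}. \<Sum>y\<in>(#) l ` Comp (n - l). real (card {c \<in> Comp n. carolina c = y})^2)"
    unfolding Comp_eq_UN_Cons[OF assms] by (rule sum.UNION_disjoint) (auto intro: finite_Comp)
  also have "\<dots> = (\<Sum>l\<in>{1..n}. \<Sum>d\<in>Comp (n - l). real (l choose length d)^2)"
  proof (rule sum.cong[OF refl])
    fix l assume l: "l \<in> {1..n}"
    have "inj_on ((#) l) (Comp (n - l))" by simp
    moreover have "card {c \<in> Comp n. carolina c = l # d} = l choose length d" if "d \<in> Comp (n - l)" for d
      using that l assms by (intro card_carolina_fibre) (auto simp: Comp_def)
    ultimately show "(\<Sum>y\<in>(#) l ` Comp (n - l). real (card {c \<in> Comp n. carolina c = y})^2) =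
        (\<Sum>d\<in>Comp (n - l). real (l choose length d)^2)"
      by (simp add: sum.reindex)
  qed
  also have "\<dots> = (\<Sum>l\<in>{1..n}. (binom_sq_poly l oo part_fps) $ (n - l))"
    by (simp add: sum_binom_sq_length_Comp)
  also have "\<dots> = eta n"
  proof -
    have "{..n} = insert 0 {1..n}" by auto
    moreover have "(binom_sq_poly 0 oo part_fps) $ n = 0" using assms by (simp add: binom_sq_poly_0)
    ultimately show ?thesis by (simp add: eta_eq_sum)
  qed
  finally show ?thesis .
qed

theorem map_deg_carolina:
  "n \<ge> 1 \<Longrightarrow> map_deg carolina (Comp n) (Comp n) = eta n / 2 ^ (n - 1)"
  by (simp add: map_deg_def sum_sq_card_carolina_fibres card_Comp)

section \<open>The coefficients of \<open>(1 - x)\<^sup>-\<^sup>1\<^sup>/\<^sup>2\<close>\<close>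

definition invsqrt_coeff :: "nat \<Rightarrow> real" where
  "invsqrt_coeff n = (-1)^n * ((-1/2 :: real) gchoose n)"

lemma invsqrt_coeff_0 [simp]: "invsqrt_coeff 0 = 1"
  by (simp add: invsqrt_coeff_def)

lemma invsqrt_coeff_Suc: "invsqrt_coeff (Suc n) = invsqrt_coeff n * (2 * real n + 1) / (2 * real n + 2)"
proof -
  have "(-1/2 :: real) * ((-1/2) gchoose n) =
      of_nat n * ((-1/2) gchoose n) + of_nat (Suc n) * ((-1/2) gchoose (Suc n))"
    by (rule gbinomial_mult_1)
  then have "(real n + 1) * ((-1/2 :: real) gchoose (Suc n)) = - (real n + 1/2) * ((-1/2) gchoose n)"
    by (simp add: algebra_simps)
  then have "((-1/2 :: real) gchoose (Suc n)) =
      - ((-1/2) gchoose n) * (2 * real n + 1) / (2 * real n + 2)"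
    by (simp add: field_simps)
  then show ?thesis by (simp add: invsqrt_coeff_def)
qed

lemma invsqrt_coeff_pos: "invsqrt_coeff n > 0"
  by (induction n) (simp_all add: invsqrt_coeff_Suc)

lemma invsqrt_coeff_nonzero [simp]: "invsqrt_coeff n \<noteq> 0"
  using invsqrt_coeff_pos[of n] by simp

lemma invsqrt_coeff_lower_bound: "1 / (2 * real n + 1) \<le> invsqrt_coeff n"
proof (induction n)
  case (Suc n)
  have "1 / (2 * real (Suc n) + 1) \<le> 1 / (2 * real n + 1) * ((2 * real n + 1) / (2 * real n + 2))"
    by (simp add: frac_le)
  also have "\<dots> \<le> invsqrt_coeff n * ((2 * real n + 1) / (2 * real n + 2))"
    using Suc by (intro mult_right_mono) auto
  finally show ?case by (simp add: invsqrt_coeff_Suc)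
qed simp

lemma invsqrt_coeff_supermult: "invsqrt_coeff m * invsqrt_coeff j \<le> invsqrt_coeff (m + j)"
proof (induction j)
  case (Suc j)
  have "(2 * real j + 1) / (2 * real j + 2) \<le> (2 * real (m + j) + 1) / (2 * real (m + j) + 2)"
    by (simp add: field_simps)
  with Suc have "invsqrt_coeff m * invsqrt_coeff j * ((2 * real j + 1) / (2 * real j + 2))
      \<le> invsqrt_coeff (m + j) * ((2 * real (m + j) + 1) / (2 * real (m + j) + 2))"
    by (intro mult_mono) (auto intro: less_imp_le invsqrt_coeff_pos)
  then show ?case by (simp add: invsqrt_coeff_Suc mult.assoc)
qed simp

lemma invsqrt_coeff_ratio_le: "j \<le> n \<Longrightarrow> invsqrt_coeff (n - j) / invsqrt_coeff n \<le> 2 * real j + 1"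
proof -
  assume "j \<le> n"
  then have "invsqrt_coeff (n - j) * invsqrt_coeff j \<le> invsqrt_coeff n"
    using invsqrt_coeff_supermult[of "n - j" j] by simp
  then have "invsqrt_coeff (n - j) / invsqrt_coeff n \<le> 1 / invsqrt_coeff j"
    using invsqrt_coeff_pos[of n] invsqrt_coeff_pos[of j] by (simp add: field_simps)
  also have "\<dots> \<le> 2 * real j + 1"
    using invsqrt_coeff_lower_bound[of j] invsqrt_coeff_pos[of j] by (simp add: field_simps)
  finally show ?thesis .
qed

lemma invsqrt_coeff_shift_ratio_tendsto: "(\<lambda>n. invsqrt_coeff (n - j) / invsqrt_coeff n) \<longlonglongrightarrow> 1"
proof (rule LIMSEQ_offset[of _ j])
  have step: "(\<lambda>m. invsqrt_coeff m / invsqrt_coeff (Suc m)) \<longlonglongrightarrow> 1"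
  proof -
    have "strict_mono (\<lambda>m. 2 * m + 1 :: nat)" by (rule strict_monoI) simp
    from LIMSEQ_subseq_LIMSEQ[OF LIMSEQ_Suc_n_over_n this]
    have "(\<lambda>m. real (Suc (2 * m + 1)) / real (2 * m + 1)) \<longlonglongrightarrow> (1 :: real)"
      by (simp add: comp_def)
    moreover have
      "invsqrt_coeff m / invsqrt_coeff (Suc m) = real (Suc (2 * m + 1)) / real (2 * m + 1)" for m
      using invsqrt_coeff_pos[of m] by (simp add: invsqrt_coeff_Suc add.commute)
    ultimately show ?thesis by simp
  qed
  show "(\<lambda>n. invsqrt_coeff (n + j - j) / invsqrt_coeff (n + j)) \<longlonglongrightarrow> 1"
  proof (induction j)
    case 0
    show ?case by simp
  next
    case (Suc j)
    have "(\<lambda>n. invsqrt_coeff n / invsqrt_coeff (n + j)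
        * (invsqrt_coeff (n + j) / invsqrt_coeff (Suc (n + j))))
        \<longlonglongrightarrow> 1 * 1"
      using Suc LIMSEQ_ignore_initial_segment[OF step, of j] by (intro tendsto_mult) simp_all
    also have "(\<lambda>n. invsqrt_coeff n / invsqrt_coeff (n + j)
        * (invsqrt_coeff (n + j) / invsqrt_coeff (Suc (n + j))))
        = (\<lambda>n. invsqrt_coeff (n + Suc j - Suc j) / invsqrt_coeff (n + Suc j))"
      by simp
    finally show ?case by simp
  qed
qed

lemma invsqrt_coeff_asymp: "(\<lambda>n. invsqrt_coeff n * sqrt (real n)) \<longlonglongrightarrow> 1 / sqrt pi"
proof -
  have "(\<lambda>n. ((-1/2::real) gchoose n) / ((-1)^n / exp ((-1/2 + 1) * of_real (ln (real n)))))
      \<longlonglongrightarrow> inverse (Gamma (- (-1/2::real)))"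
    by (rule gbinomial_asymptotic)
  also have "inverse (Gamma (- (-1/2::real))) = 1 / sqrt pi"
    using Gamma_one_half_real by (simp add: inverse_eq_divide)
  finally have lim: "(\<lambda>n. ((-1/2::real) gchoose n) / ((-1)^n / exp ((-1/2 + 1) * ln (real n))))
      \<longlonglongrightarrow> 1 / sqrt pi" by simp
  show ?thesis
  proof (rule Lim_transform_eventually[OF lim])
    show "\<forall>\<^sub>F n in sequentially. ((-1/2::real) gchoose n) / ((-1)^n / exp ((-1/2 + 1) * ln (real n)))
        = invsqrt_coeff n * sqrt (real n)"
      using eventually_gt_at_top[of "0::nat"]
    proof eventually_elim
      case (elim n)
      then have "exp ((-1/2 + 1) * ln (real n)) = real n powr (1/2)"
        by (simp add: powr_def)
      also have "\<dots> = sqrt (real n)"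
        using elim by (simp add: powr_half_sqrt)
      finally have "exp ((-1/2 + 1) * ln (real n)) = sqrt (real n)" .
      then show ?case
        by (cases "even n") (simp_all add: invsqrt_coeff_def)
    qed
  qed
qed

section \<open>Coefficient asymptotics of \<open>(1 - x/\<rho>)\<^sup>-\<^sup>1\<^sup>/\<^sup>2 h(x)\<close>\<close>

lemma convolution_div_tendsto:
  fixes a \<beta> M :: "nat \<Rightarrow> real"
  assumes ratio: "\<And>j. (\<lambda>n. a (n - j) / a n) \<longlonglongrightarrow> 1"
    and bound: "\<And>j n. j \<le> n \<Longrightarrow> \<bar>a (n - j) / a n * \<beta> j\<bar> \<le> M j"
    and "summable M"
  shows "(\<lambda>n. (\<Sum>k\<le>n. a k * \<beta> (n - k)) / a n) \<longlonglongrightarrow> (\<Sum>j. \<beta> j)"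
proof -
  define t where "t j n = (if j \<le> n then a (n - j) / a n * \<beta> j else 0)" for j n
  have "(\<lambda>n. t j n) \<longlonglongrightarrow> \<beta> j" for j
  proof -
    have "(\<lambda>n. a (n - j) / a n * \<beta> j) \<longlonglongrightarrow> 1 * \<beta> j"
      by (intro tendsto_intros ratio)
    moreover have "\<forall>\<^sub>F n in sequentially. a (n - j) / a n * \<beta> j = t j n"
      using eventually_ge_at_top[of j] by eventually_elim (simp add: t_def)
    ultimately show ?thesis by (simp add: Lim_transform_eventually)
  qed
  moreover have "norm (t j n) \<le> M j" for j n
  proof -
    have "0 \<le> M j" using bound[of j j] abs_ge_zero order_trans by blast
    then show ?thesis using bound[of j n] by (auto simp: t_def)
  qed
  ultimately have "(\<lambda>n. \<Sum>j. t j n) \<longlonglongrightarrow> (\<Sum>j. \<beta> j)"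
    using tannerys_theorem[of t \<beta> sequentially M] \<open>summable M\<close> by (auto intro: always_eventually)
  moreover have "(\<Sum>j. t j n) = (\<Sum>k\<le>n. a k * \<beta> (n - k)) / a n" for n
  proof -
    have "(\<Sum>j. t j n) = (\<Sum>j\<le>n. a (n - j) * \<beta> j) / a n"
      by (subst suminf_finite[of "{..n}"]) (auto simp: t_def sum_divide_distrib)
    also have "(\<Sum>j\<le>n. a (n - j) * \<beta> j) = (\<Sum>k\<le>n. a k * \<beta> (n - k))"
      by (rule sum.reindex_bij_witness[of _ "\<lambda>k. n - k" "\<lambda>k. n - k"]) auto
    finally show ?thesis .
  qed
  ultimately show ?thesis by simp
qed

lemma summable_Suc_mult_geometric:
  fixes q :: real
  assumes "0 \<le> q" "q < 1"
  shows "summable (\<lambda>n. real (Suc n) * q ^ n)"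
proof -
  have "summable (\<lambda>n. diffs (\<lambda>_. 1::real) n * q ^ n)"
    by (rule termdiff_converges[where K=1]) (use assms in \<open>auto intro: summable_geometric\<close>)
  then show ?thesis by (simp add: diffs_def)
qed

definition invsqrt_fps :: "real \<Rightarrow> real fps" where
  "invsqrt_fps u = Abs_fps (\<lambda>k. invsqrt_coeff k * u^k)"

lemma invsqrt_fps_nth_0 [simp]: "invsqrt_fps u $ 0 = 1"
  by (simp add: invsqrt_fps_def)

lemma invsqrt_fps_squared: "invsqrt_fps u ^ 2 * (1 - fps_const u * fps_X) = 1"
proof -
  define L where "L = fps_const (-u) * fps_X"
  have L0: "L $ 0 = 0" by (simp add: L_def)
  have "invsqrt_fps u = Abs_fps (\<lambda>k. (-u)^k * ((-1/2) gchoose k))"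
    by (simp add: invsqrt_fps_def invsqrt_coeff_def power_minus[of u] mult_ac)
  also have "\<dots> = fps_binomial (-1/2) oo L"
    unfolding L_def fps_compose_linear by simp
  finally have "invsqrt_fps u = fps_binomial (-1/2) oo L" .
  then have "invsqrt_fps u ^ 2 = (fps_binomial (-1/2) * fps_binomial (-1/2)) oo L"
    by (simp add: power2_eq_square fps_compose_mult_distrib[OF L0])
  also have "fps_binomial (-1/2) * fps_binomial (-1/2) = fps_binomial (-1 :: real)"
    using fps_binomial_add_mult[of "-1/2::real" "-1/2"] by simp
  finally have sq: "invsqrt_fps u ^ 2 = fps_binomial (-1) oo L" .
  have "1 - fps_const u * fps_X = (1 + fps_X) oo L"
    by (simp add: fps_compose_add_distrib L0 L_def)
  then have "invsqrt_fps u ^ 2 * (1 - fps_const u * fps_X) = (fps_binomial (-1) * (1 + fps_X)) oo L"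
    unfolding sq by (simp add: fps_compose_mult_distrib[OF L0])
  also have "fps_binomial (-1 :: real) * (1 + fps_X) = 1"
  proof (rule fps_ext)
    fix n
    have "((-1::real) gchoose k) = (-1)^k" for k
      using gbinomial_minus[of "1::real" k] by (simp flip: binomial_gbinomial)
    then show "(fps_binomial (-1 :: real) * (1 + fps_X)) $ n = (1 :: real fps) $ n"
      by (cases n) (simp_all add: algebra_simps)
  qed
  finally show ?thesis by simp
qed

lemma fps_coeff_geometric_bound:
  fixes h :: "real fps"
  assumes "0 < \<rho>" and "ereal \<rho> < fps_conv_radius h"
  obtains B q where "0 \<le> q" "q < 1" "\<And>j. \<bar>h $ j\<bar> * \<rho>^j \<le> B * q^j"
proof -
  obtain s where s: "\<rho> < s" "ereal s < fps_conv_radius h"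
    using ereal_dense2[OF assms(2)] by auto
  define B where "B = (\<Sum>j. norm (h $ j * s^j))"
  have "summable (\<lambda>j. norm (h $ j * s^j))"
    using s assms(1) by (intro norm_summable_fps) simp
  then have "norm (h $ j * s^j) \<le> B" for j
    unfolding B_def using sum_le_suminf[of "\<lambda>j. norm (h $ j * s^j)" "{j}"] by simp
  then have "\<bar>h $ j\<bar> * s^j * (\<rho> / s)^j \<le> B * (\<rho> / s)^j" for j
    using s assms(1) by (intro mult_right_mono) (simp_all add: abs_mult)
  then have "\<bar>h $ j\<bar> * \<rho>^j \<le> B * (\<rho> / s)^j" for j
    using s assms(1) by (simp add: power_divide)
  moreover have "0 \<le> \<rho> / s" "\<rho> / s < 1" using s assms(1) by simp_all
  ultimately show thesis using that by blast
qed

lemma invsqrt_fps_mult_nth: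
  assumes "0 < \<rho>"
  shows "(invsqrt_fps (1 / \<rho>) * h) $ n * \<rho>^n = (\<Sum>k\<le>n. invsqrt_coeff k * (h $ (n - k) * \<rho>^(n - k)))"
proof -
  have "(invsqrt_fps (1 / \<rho>) * h) $ n * \<rho>^n = (\<Sum>k\<le>n. invsqrt_coeff k * (1 / \<rho>)^k * h $ (n - k) * \<rho>^n)"
    by (simp add: invsqrt_fps_def fps_mult_nth atLeast0AtMost sum_distrib_right)
  also have "\<dots> = (\<Sum>k\<le>n. invsqrt_coeff k * (h $ (n - k) * \<rho>^(n - k)))"
  proof (rule sum.cong[OF refl])
    fix k assume "k \<in> {..n}"
    then have "(1 / \<rho>)^k * \<rho>^n = \<rho>^(n - k)"
      using assms by (simp add: power_diff power_one_over field_simps)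
    then show "invsqrt_coeff k * (1 / \<rho>)^k * h $ (n - k) * \<rho>^n =
        invsqrt_coeff k * (h $ (n - k) * \<rho>^(n - k))"
      by (simp add: mult_ac)
  qed
  finally show ?thesis .
qed

text \<open>A Darboux-type transfer: if \<open>h\<close> converges beyond \<open>\<rho>\<close>, the singular factor
  \<open>(1 - x/\<rho>)\<^sup>-\<^sup>1\<^sup>/\<^sup>2\<close> alone dictates the growth of the coefficients, up to the factor \<open>h(\<rho>)\<close>.\<close>
lemma invsqrt_fps_mult_coeff_tendsto:
  assumes "0 < \<rho>" and "ereal \<rho> < fps_conv_radius h"
  shows "(\<lambda>n. (invsqrt_fps (1 / \<rho>) * h) $ n * \<rho>^n / invsqrt_coeff n) \<longlonglongrightarrow> eval_fps h \<rho>"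
proof -
  obtain B q where q: "0 \<le> q" "q < 1" and hB: "\<And>j. \<bar>h $ j\<bar> * \<rho>^j \<le> B * q^j"
    using fps_coeff_geometric_bound[OF assms] by blast
  define \<beta> where "\<beta> j = h $ j * \<rho>^j" for j
  have "(\<lambda>n. (\<Sum>k\<le>n. invsqrt_coeff k * \<beta> (n - k)) / invsqrt_coeff n) \<longlonglongrightarrow> (\<Sum>j. \<beta> j)"
  proof (rule convolution_div_tendsto[OF invsqrt_coeff_shift_ratio_tendsto])
    show "summable (\<lambda>j. B * (real (Suc j) * q^j) * 2)"
      by (intro summable_mult summable_mult2 summable_Suc_mult_geometric q)
    fix j n :: nat assume "j \<le> n"
    have \<beta>: "\<bar>\<beta> j\<bar> \<le> B * q^j" using hB assms(1) by (simp add: \<beta>_def abs_mult)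
    have "\<bar>invsqrt_coeff (n - j) / invsqrt_coeff n * \<beta> j\<bar> =
        invsqrt_coeff (n - j) / invsqrt_coeff n * \<bar>\<beta> j\<bar>"
      using invsqrt_coeff_pos[of n] invsqrt_coeff_pos[of "n - j"] by (simp add: abs_mult)
    also have "\<dots> \<le> (2 * real j + 1) * (B * q^j)"
      using invsqrt_coeff_ratio_le[OF \<open>j \<le> n\<close>] \<beta> by (intro mult_mono) auto
    also have "\<dots> \<le> B * (real (Suc j) * q^j) * 2"
      using \<beta> q by (simp add: algebra_simps)
    finally show "\<bar>invsqrt_coeff (n - j) / invsqrt_coeff n * \<beta> j\<bar> \<le> B * (real (Suc j) * q^j) * 2" .
  qed
  then show ?thesis
    using assms(1) by (simp add: invsqrt_fps_mult_nth \<beta>_def eval_fps_def)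
qed

section \<open>Coefficient bounds for \<open>(1 + E)\<^sup>-\<^sup>1\<^sup>/\<^sup>2\<close>\<close>

lemma abs_fps_mult_nth_le:
  fixes F G :: "real fps"
  shows "\<bar>(F * G) $ n\<bar> \<le> (\<Sum>i\<le>n. \<bar>F $ i\<bar> * \<bar>G $ (n - i)\<bar>)"
  unfolding fps_mult_nth atLeast0AtMost abs_mult[symmetric] by (rule sum_abs)

lemma sum_abs_le_of_finite_support:
  fixes E :: "real fps"
  assumes "\<And>i. N < i \<Longrightarrow> E $ i = 0" and "finite A"
  shows "(\<Sum>i\<in>A. \<bar>E $ i\<bar>) \<le> (\<Sum>i\<le>N. \<bar>E $ i\<bar>)"
proof -
  have "(\<Sum>i\<in>A. \<bar>E $ i\<bar>) = (\<Sum>i\<in>A \<inter> {..N}. \<bar>E $ i\<bar>)"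
    using assms by (intro sum.mono_neutral_right) (auto intro!: leI)
  also have "\<dots> \<le> (\<Sum>i\<le>N. \<bar>E $ i\<bar>)" by (intro sum_mono2) auto
  finally show ?thesis .
qed

lemma abs_mult_fps_deriv_nth_le:
  fixes E K :: "real fps"
  assumes "E $ 0 = 0" and "\<And>j. j \<le> m \<Longrightarrow> \<bar>K $ j\<bar> \<le> 1"
  shows "\<bar>(E * fps_deriv K) $ m\<bar> \<le> real (m + 1) * (\<Sum>i\<le>m. \<bar>E $ i\<bar>)"
proof -
  have "\<bar>(E * fps_deriv K) $ m\<bar> \<le> (\<Sum>i\<le>m. \<bar>E $ i\<bar> * real (m + 1))"
  proof (rule order_trans[OF abs_fps_mult_nth_le sum_mono])
    fix i assume i: "i \<in> {..m}"
    show "\<bar>E $ i\<bar> * \<bar>fps_deriv K $ (m - i)\<bar> \<le> \<bar>E $ i\<bar> * real (m + 1)"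
    proof (cases "i = 0")
      case True
      then show ?thesis using assms(1) by simp
    next
      case False
      then have "real (m - i + 1) * \<bar>K $ (m - i + 1)\<bar> \<le> real (m - i + 1) * 1"
        using assms(2)[of "m - i + 1"] i by (intro mult_left_mono) auto
      also have "\<dots> \<le> real (m + 1)" by simp
      finally show ?thesis by (intro mult_left_mono) (simp_all add: abs_mult)
    qed
  qed
  then show ?thesis by (simp add: sum_distrib_right[symmetric] mult.commute)
qed

lemma abs_fps_deriv_mult_nth_le:
  fixes E K :: "real fps"
  assumes "\<And>j. j \<le> m \<Longrightarrow> \<bar>K $ j\<bar> \<le> 1"
  shows "\<bar>(fps_deriv E * K) $ m\<bar> \<le> real (m + 1) * (\<Sum>i\<in>Suc ` {..m}. \<bar>E $ i\<bar>)"
proof -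
  have "\<bar>(fps_deriv E * K) $ m\<bar> \<le> (\<Sum>i\<le>m. \<bar>E $ Suc i\<bar> * real (m + 1))"
  proof (rule order_trans[OF abs_fps_mult_nth_le sum_mono])
    fix i assume "i \<in> {..m}"
    then have "\<bar>E $ Suc i\<bar> * real (i + 1) * \<bar>K $ (m - i)\<bar> \<le> \<bar>E $ Suc i\<bar> * real (m + 1) * 1"
      using assms[of "m - i"] by (intro mult_mono mult_left_mono) auto
    then show "\<bar>fps_deriv E $ i\<bar> * \<bar>K $ (m - i)\<bar> \<le> \<bar>E $ Suc i\<bar> * real (m + 1)"
      by (simp add: abs_mult mult_ac)
  qed
  then show ?thesis by (simp add: sum.reindex sum_distrib_left mult.commute)
qed

lemma square_mult_eq_1_nth_Suc:
  fixes K E :: "real fps"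
  assumes "K^2 * (1 + E) = 1"
  shows "2 * (real (m + 1) * K $ Suc m) = - 2 * (E * fps_deriv K) $ m - (fps_deriv E * K) $ m"
proof -
  \<comment> \<open>differentiate \<open>K\<^sup>2 (1 + E) = 1\<close> and cancel \<open>K\<close>\<close>
  have "K * (2 * (1 + E) * fps_deriv K + fps_deriv E * K) = fps_deriv (K^2 * (1 + E))"
    by (simp add: power2_eq_square algebra_simps)
  moreover have "K \<noteq> 0" using assms by auto
  ultimately have "2 * (1 + E) * fps_deriv K + fps_deriv E * K = 0"
    using assms by simp
  then have "(2 * fps_deriv K) $ m + 2 * (E * fps_deriv K) $ m + (fps_deriv E * K) $ m = 0"
    by (metis (no_types, lifting) distrib_left distrib_right fps_add_nth fps_zero_nth mult.assoc
        mult.right_neutral fps_mult_left_const_nth fps_numeral_fps_const)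
  then show ?thesis by (simp add: fps_numeral_fps_const)
qed

lemma inverse_sqrt_coeff_le_1:
  fixes K E :: "real fps"
  assumes KE: "K^2 * (1 + E) = 1" and E0: "E $ 0 = 0" and E_supp: "\<And>i. N < i \<Longrightarrow> E $ i = 0"
    and E_small: "(\<Sum>i\<le>N. \<bar>E $ i\<bar>) \<le> 2/3"
  shows "\<bar>K $ n\<bar> \<le> 1"
proof (induction n rule: less_induct)
  case (less n)
  show ?case
  proof (cases n)
    case 0
    have "(K $ 0)^2 = 1"
      using arg_cong[OF KE, of "\<lambda>F. F $ 0"] E0 by (simp add: power2_eq_square)
    then show ?thesis using 0 by (auto simp: power2_eq_1_iff)
  next
    case (Suc m)
    define e where "e = (\<Sum>i\<le>N. \<bar>E $ i\<bar>)"
    have IH: "\<bar>K $ j\<bar> \<le> 1" if "j \<le> m" for j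
      using less that Suc by simp
    have "\<bar>(E * fps_deriv K) $ m\<bar> \<le> real (m + 1) * (\<Sum>i\<le>m. \<bar>E $ i\<bar>)"
      by (rule abs_mult_fps_deriv_nth_le[OF E0 IH])
    also have "\<dots> \<le> real (m + 1) * e"
      unfolding e_def by (intro mult_left_mono sum_abs_le_of_finite_support[OF E_supp]) auto
    finally have bound1: "\<bar>(E * fps_deriv K) $ m\<bar> \<le> real (m + 1) * e" .
    have "\<bar>(fps_deriv E * K) $ m\<bar> \<le> real (m + 1) * (\<Sum>i\<in>Suc ` {..m}. \<bar>E $ i\<bar>)"
      by (rule abs_fps_deriv_mult_nth_le[OF IH])
    also have "\<dots> \<le> real (m + 1) * e"
      unfolding e_def by (intro mult_left_mono sum_abs_le_of_finite_support[OF E_supp]) auto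
    finally have bound2: "\<bar>(fps_deriv E * K) $ m\<bar> \<le> real (m + 1) * e" .
    have "2 * (real (m + 1) * \<bar>K $ n\<bar>) \<le> 3 * (real (m + 1) * e)"
      using bound1 bound2 arg_cong[OF square_mult_eq_1_nth_Suc[OF KE, of m], of abs] Suc
      by (simp add: abs_mult)
    also have "\<dots> \<le> real (m + 1) * 2"
      using E_small by (simp only: mult.left_commute[of 3]) (intro mult_left_mono, auto simp: e_def)
    finally have "real (m + 1) * \<bar>K $ n\<bar> \<le> real (m + 1) * 1" by linarith
    then show ?thesis by (rule mult_left_le_imp_le) simp
  qed
qed

lemma inverse_sqrt_coeff_bound:
  fixes K E :: "real fps"
  assumes "K^2 * (1 + E) = 1" and "E $ 0 = 0" and "\<And>i. N < i \<Longrightarrow> E $ i = 0" and "0 < R"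
    and "(\<Sum>i\<le>N. \<bar>E $ i\<bar> * R^i) \<le> 2/3"
  shows "\<bar>K $ n\<bar> * R^n \<le> 1"
proof -
  define L where "L = fps_const R * fps_X"
  have L0: "L $ 0 = 0" by (simp add: L_def)
  have scale: "(F oo L) $ k = R^k * F $ k" for F :: "real fps" and k
    by (simp add: L_def fps_compose_linear)
  have "(K oo L)^2 * (1 + (E oo L)) = (K^2 * (1 + E)) oo L"
    by (simp add: fps_compose_power[OF L0] fps_compose_mult_distrib[OF L0] fps_compose_add_distrib)
  then have "(K oo L)^2 * (1 + (E oo L)) = 1" using assms(1) by simp
  then have "\<bar>(K oo L) $ n\<bar> \<le> 1"
    by (rule inverse_sqrt_coeff_le_1[where N = N])
      (use assms in \<open>simp_all add: scale abs_mult mult.commute\<close>)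
  then show ?thesis using assms(4) by (simp add: scale abs_mult mult.commute)
qed

lemma fps_conv_radius_ge_coeff_bound:
  fixes f :: "real fps"
  assumes "0 < R" and "\<And>n. \<bar>f $ n\<bar> * R^n \<le> 1"
  shows "ereal R \<le> fps_conv_radius f"
  unfolding fps_conv_radius_def
proof (rule conv_radius_geI_ex')
  fix r :: real assume r: "0 < r" "ereal r < ereal R"
  show "summable (\<lambda>n. f $ n * of_real r ^ n)"
  proof (rule summable_comparison_test[OF _ summable_geometric[of "r / R"]])
    show "\<exists>N. \<forall>n\<ge>N. norm (f $ n * of_real r ^ n) \<le> (r / R) ^ n"
    proof (intro exI allI impI)
      fix n :: nat
      have "norm (f $ n * of_real r ^ n) = \<bar>f $ n\<bar> * R^n * (r / R)^n"
        using r assms(1) by (simp add: abs_mult power_divide)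
      also have "\<dots> \<le> (r / R)^n"
        using assms(2)[of n] r assms(1) by (intro mult_left_le_one_le) auto
      finally show "norm (f $ n * of_real r ^ n) \<le> (r / R)^n" .
    qed
  qed (use r assms(1) in simp)
qed

section \<open>The dominant singularity\<close>

lemma quartic_eq: "quartic x = (1 - 2*x)^2 - 4 * x^3 * (1 - x)"
  unfolding quartic_def by (simp add: algebra_simps power2_eq_square power3_eq_cube power4_eq_xxxx)

lemma quartic_lower_bound:
  assumes "0 \<le> a" "a \<le> x" "x \<le> b" "b \<le> 1/2"
  shows "(1 - 2*b)^2 - 4 * b^3 * (1 - a) \<le> quartic x"
proof -
  have "(1 - 2*b)^2 \<le> (1 - 2*x)^2" using assms by (intro power_mono) auto
  moreover have "x^3 * (1 - x) \<le> b^3 * (1 - a)" using assms by (intro mult_mono power_mono) auto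
  ultimately show ?thesis unfolding quartic_eq by linarith
qed

lemma quartic_pos: "0 \<le> x \<Longrightarrow> x \<le> 0.338 \<Longrightarrow> 0 < quartic x"
proof -
  assume x: "0 \<le> x" "x \<le> 0.338"
  consider "x \<le> 0.3" | "0.3 \<le> x" "x \<le> 0.33" | "0.33 \<le> x" by linarith
  then show ?thesis
  proof cases
    case 1
    have "(1 - 2 * 0.3)^2 - 4 * 0.3^3 * (1 - 0) \<le> quartic x"
      using x 1 by (intro quartic_lower_bound) auto
    then show ?thesis by (simp add: power_divide)
  next
    case 2
    have "(1 - 2 * 0.33)^2 - 4 * 0.33^3 * (1 - 0.3) \<le> quartic x"
      using x 2 by (intro quartic_lower_bound) auto
    then show ?thesis by (simp add: power_divide)
  next
    case 3
    have "(1 - 2 * 0.338)^2 - 4 * 0.338^3 * (1 - 0.33) \<le> quartic x"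
      using x 3 by (intro quartic_lower_bound) auto
    then show ?thesis by (simp add: power_divide)
  qed
qed

lemma smallest_quartic_root_bounds:
  assumes "0 < \<rho>" "quartic \<rho> = 0" "\<forall>x. 0 < x \<and> x < \<rho> \<longrightarrow> quartic x \<noteq> 0"
  shows "0.338 < \<rho>" "\<rho> \<le> 0.341"
proof -
  show "0.338 < \<rho>" using quartic_pos[of \<rho>] assms by force
  have "continuous_on {0.338..0.341} quartic" unfolding quartic_def by (intro continuous_intros)
  moreover have "quartic 0.341 \<le> 0" "0 \<le> quartic 0.338" by (simp_all add: quartic_def power_divide)
  ultimately obtain x where x: "0.338 \<le> x" "x \<le> 0.341" "quartic x = 0"
    using IVT2'[of quartic "0.341" 0 "0.338"] by auto
  show "\<rho> \<le> 0.341"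
  proof (rule ccontr)
    assume "\<not> \<rho> \<le> 0.341"
    then have "0 < x \<and> x < \<rho>" using x by auto
    then show False using assms(3) x(3) by blast
  qed
qed

text \<open>The cubic \<open>quartic_fps / (1 - u x)\<close> when \<open>1/u\<close> is a root of the quartic.\<close>
definition quartic_cofactor :: "real \<Rightarrow> real fps" where
  "quartic_cofactor u = fps_of_poly [:1, u - 4, (u - 2)^2, u * (u - 2)^2 - 4:]"

lemma quartic_cofactor_nth:
  "quartic_cofactor u $ i = (if i = 0 then 1 else if i = 1 then u - 4 else if i = 2 then (u - 2)^2
     else if i = 3 then u * (u - 2)^2 - 4 else 0)"
  by (simp add: quartic_cofactor_def coeff_pCons split: nat.split)

lemma quartic_fps_factor:
  assumes "quartic \<rho> = 0"
  shows "(1 - fps_const (1 / \<rho>) * fps_X) * quartic_cofactor (1 / \<rho>) = quartic_fps"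
proof (rule fps_ext)
  fix n
  define u where "u = 1 / \<rho>"
  have "\<rho> \<noteq> 0" using assms by (auto simp: quartic_def)
  then have "u * \<rho> = 1" by (simp add: u_def)
  then have u: "u^4 - 4*u^3 + 4*u^2 - 4*u + 4 = 0"
    using assms unfolding quartic_def by algebra
  have "(1 - fps_const u * fps_X) * quartic_cofactor u =
      quartic_cofactor u - fps_const u * (fps_X * quartic_cofactor u)"
    by (simp add: algebra_simps)
  moreover have "quartic_fps $ n = (if n = 0 then 1 else if n = 1 then -4 else if n = 2 then 4
      else if n = 3 then -4 else if n = 4 then 4 else 0)"
    by (simp add: quartic_fps_def fps_X_power_mult_nth numeral_fps_const power2_eq_square fps_X_power_nth
        flip: fps_const_mult fps_const_power; presburger)
  ultimately show "((1 - fps_const (1 / \<rho>) * fps_X) * quartic_cofactor (1 / \<rho>)) $ n = quartic_fps $ n"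
    using u by (auto simp: u_def[symmetric] quartic_cofactor_nth fps_X_mult_nth power2_eq_square algebra_simps
        numeral_eq_Suc power3_eq_cube power4_eq_xxxx)
qed

lemma quartic_cofactor_coeff_bound:
  assumes "2.93 \<le> u" "u \<le> 2.96"
  shows "(\<Sum>i\<le>3. \<bar>(quartic_cofactor u - 1) $ i\<bar> * 0.39^i) \<le> 2/3"
proof -
  have p1: "(u - 2)^2 \<le> 0.96^2" using assms by (intro power_mono) auto
  have p2: "0.93^2 \<le> (u - 2)^2" using assms by (intro power_mono) auto
  have m1: "u * (u - 2)^2 \<le> 2.96 * 0.96^2" using assms p1 by (intro mult_mono) auto
  have m2: "2.93 * 0.93^2 \<le> u * (u - 2)^2" using assms p2 by (intro mult_mono) auto
  have "\<bar>u * (u - 2)^2 - 4\<bar> \<le> 1.466" using m1 m2 by (simp add: power2_eq_square abs_if)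
  moreover have "\<bar>u - 4\<bar> \<le> 1.07" using assms by simp
  moreover have "(u - 2)^2 \<le> 0.9216" using p1 by (simp add: power2_eq_square)
  ultimately have "\<bar>u - 4\<bar> * 0.39 + (u - 2)^2 * 0.39^2 + \<bar>u * (u - 2)^2 - 4\<bar> * 0.39^3
      \<le> 1.07 * 0.39 + 0.9216 * 0.39^2 + 1.466 * 0.39^3"
    by (intro add_mono mult_right_mono) auto
  also have "\<dots> \<le> 2/3" by (simp add: power_divide)
  finally show ?thesis by (simp add: quartic_cofactor_nth numeral_3_eq_3 numeral_2_eq_2)
qed

text \<open>\<open>1 / sqrt (quartic_fps / (1 - x/\<rho>))\<close>, the factor of \<open>eta_fps\<close> that is regular at \<open>\<rho>\<close>.\<close>
definition eta_regular_factor :: "real \<Rightarrow> real fps" where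
  "eta_regular_factor \<rho> = inverse (invsqrt_fps (1 / \<rho>) * fps_radical (\<lambda>k x. root k x) 2 quartic_fps)"

lemma eta_fps_eq_invsqrt_mult: "eta_fps = invsqrt_fps (1 / \<rho>) * ((1 - fps_X) * eta_regular_factor \<rho>)"
proof -
  have "eta_fps = (1 - fps_X) * (invsqrt_fps (1 / \<rho>) * inverse (invsqrt_fps (1 / \<rho>)))
      * inverse (fps_radical (\<lambda>k x. root k x) 2 quartic_fps)"
    using inverse_mult_eq_1'[of "invsqrt_fps (1 / \<rho>)"] by (simp add: eta_fps_def)
  then show ?thesis
    by (simp add: eta_regular_factor_def fps_inverse_mult mult_ac)
qed

lemma eta_regular_factor_squared:
  assumes "quartic \<rho> = 0"
  shows "eta_regular_factor \<rho> ^ 2 * quartic_cofactor (1 / \<rho>) = 1"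
proof -
  define W where "W = invsqrt_fps (1 / \<rho>) * fps_radical (\<lambda>k x. root k x) 2 quartic_fps"
  have "W^2 = invsqrt_fps (1 / \<rho>) ^ 2 * (1 - fps_const (1 / \<rho>) * fps_X) * quartic_cofactor (1 / \<rho>)"
    by (simp add: W_def power_mult_distrib quartic_fps_radical quartic_fps_factor[OF assms] mult.assoc)
  then have W2: "W^2 = quartic_cofactor (1 / \<rho>)"
    by (simp add: invsqrt_fps_squared)
  have "W $ 0 \<noteq> 0" by (simp add: W_def quartic_fps_def)
  have "eta_regular_factor \<rho> ^ 2 * quartic_cofactor (1 / \<rho>) = (inverse W * W)^2"
    by (simp add: eta_regular_factor_def W_def[symmetric] W2[symmetric] power_mult_distrib)
  also have "\<dots> = 1" using inverse_mult_eq_1[OF \<open>W $ 0 \<noteq> 0\<close>] by simp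
  finally show ?thesis .
qed

lemma eta_regular_factor_conv_radius:
  assumes "0 < \<rho>" "quartic \<rho> = 0" "\<forall>x. 0 < x \<and> x < \<rho> \<longrightarrow> quartic x \<noteq> 0"
  shows "ereal 0.39 \<le> fps_conv_radius (eta_regular_factor \<rho>)"
proof (rule fps_conv_radius_ge_coeff_bound)
  have "2.93 \<le> 1 / \<rho>" "1 / \<rho> \<le> 2.96"
    using smallest_quartic_root_bounds[OF assms] assms(1)
    by (simp_all add: pos_le_divide_eq pos_divide_le_eq)
  moreover have "eta_regular_factor \<rho> ^ 2 * (1 + (quartic_cofactor (1 / \<rho>) - 1)) = 1"
    using eta_regular_factor_squared[OF assms(2)] by simp
  ultimately show "\<bar>eta_regular_factor \<rho> $ n\<bar> * 0.39^n \<le> 1" for n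
    by (intro inverse_sqrt_coeff_bound[where N = 3 and E = "quartic_cofactor (1 / \<rho>) - 1"]
        quartic_cofactor_coeff_bound)
      (simp_all add: quartic_cofactor_nth)
qed simp

lemma eta_regular_factor_conv_radius_gt:
  assumes "0 < \<rho>" "quartic \<rho> = 0" "\<forall>x. 0 < x \<and> x < \<rho> \<longrightarrow> quartic x \<noteq> 0"
  shows "ereal \<rho> < fps_conv_radius (eta_regular_factor \<rho>)"
    and "ereal \<rho> < fps_conv_radius ((1 - fps_X) * eta_regular_factor \<rho>)"
proof -
  have "ereal \<rho> < ereal 0.39" using smallest_quartic_root_bounds[OF assms] by simp
  then show K: "ereal \<rho> < fps_conv_radius (eta_regular_factor \<rho>)"
    using eta_regular_factor_conv_radius[OF assms] by (rule order.strict_trans2)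
  have "\<infinity> \<le> fps_conv_radius (1 - fps_X :: real fps)"
    using fps_conv_radius_diff[of "1 :: real fps" fps_X] by simp
  then have "fps_conv_radius (eta_regular_factor \<rho>) \<le>
      fps_conv_radius ((1 - fps_X) * eta_regular_factor \<rho>)"
    using fps_conv_radius_mult[of "1 - fps_X" "eta_regular_factor \<rho>"] by simp
  with K show "ereal \<rho> < fps_conv_radius ((1 - fps_X) * eta_regular_factor \<rho>)" by simp
qed

lemma eval_eta_regular_factor_squared:
  assumes "0 < \<rho>" "quartic \<rho> = 0" "\<forall>x. 0 < x \<and> x < \<rho> \<longrightarrow> quartic x \<noteq> 0"
  shows "eval_fps (eta_regular_factor \<rho>) \<rho> ^ 2 * (4 * (1 - 3*\<rho> + 2*\<rho>^2 - \<rho>^3)) = 1"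
proof -
  define K where "K = eta_regular_factor \<rho>"
  have "eval_fps (K ^ 2 * quartic_cofactor (1 / \<rho>)) \<rho>
      = eval_fps K \<rho> ^ 2 * poly [:1, 1 / \<rho> - 4, (1 / \<rho> - 2)^2, 1 / \<rho> * (1 / \<rho> - 2)^2 - 4:] \<rho>"
    using eta_regular_factor_conv_radius_gt(1)[OF assms] assms(1) fps_conv_radius_power[of K 2]
    by (simp add: K_def eval_fps_mult eval_fps_power quartic_cofactor_def)
  also have "poly [:1, 1 / \<rho> - 4, (1 / \<rho> - 2)^2, 1 / \<rho> * (1 / \<rho> - 2)^2 - 4:] \<rho>
      = 4 * (1 - 3*\<rho> + 2*\<rho>^2 - \<rho>^3)"
    using assms(1) by (simp add: field_simps power2_eq_square power3_eq_cube)
  finally show ?thesis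
    using eta_regular_factor_squared[OF assms(2)] by (simp add: K_def)
qed

theorem eta_asymptotics:
  assumes "0 < \<rho>" "quartic \<rho> = 0" "\<forall>x. 0 < x \<and> x < \<rho> \<longrightarrow> quartic x \<noteq> 0"
  defines "\<kappa> \<equiv> 1 - 3*\<rho> + 2*\<rho>^2 - \<rho>^3"
  shows "0 < \<kappa>" and "(\<lambda>n. eta n * \<rho>^n / invsqrt_coeff n) \<longlonglongrightarrow> (1 - \<rho>) / (2 * sqrt \<kappa>)"
proof -
  define K where "K = eta_regular_factor \<rho>"
  have lim: "(\<lambda>n. eta n * \<rho>^n / invsqrt_coeff n) \<longlonglongrightarrow> eval_fps ((1 - fps_X) * K) \<rho>"
    using invsqrt_fps_mult_coeff_tendsto[OF assms(1) eta_regular_factor_conv_radius_gt(2)[OF assms(1-3)]]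
    by (simp add: eta_def eta_fps_eq_invsqrt_mult[of \<rho>] K_def)
  have "ereal \<rho> < fps_conv_radius K" "fps_conv_radius (1 - fps_X :: real fps) = \<infinity>"
    using eta_regular_factor_conv_radius_gt(1)[OF assms(1-3)] fps_conv_radius_diff[of 1 fps_X]
    by (simp_all add: K_def)
  then have eval: "eval_fps ((1 - fps_X) * K) \<rho> = (1 - \<rho>) * eval_fps K \<rho>"
    using assms(1) by (simp add: eval_fps_mult eval_fps_diff)
  have K\<kappa>: "eval_fps K \<rho> ^ 2 * (4 * \<kappa>) = 1"
    unfolding K_def \<kappa>_def by (rule eval_eta_regular_factor_squared[OF assms(1-3)])
  show "0 < \<kappa>"
  proof (rule ccontr)
    assume "\<not> 0 < \<kappa>"
    then have "eval_fps K \<rho> ^ 2 * (4 * \<kappa>) \<le> 0" by (intro mult_nonneg_nonpos) auto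
    with K\<kappa> show False by simp
  qed
  \<comment> \<open>the sign of \<open>K(\<rho>)\<close> is fixed by the positivity of the coefficients \<open>eta n\<close>\<close>
  have "0 \<le> eval_fps ((1 - fps_X) * K) \<rho>"
    using assms(1) by (intro LIMSEQ_le_const[OF lim] exI allI impI)
      (simp add: eta_nonneg invsqrt_coeff_pos less_imp_le)
  then have "0 \<le> eval_fps K \<rho>"
    using smallest_quartic_root_bounds[OF assms(1-3)] by (simp add: eval zero_le_mult_iff)
  then have "eval_fps K \<rho> = sqrt (eval_fps K \<rho> ^ 2)" by simp
  also have "eval_fps K \<rho> ^ 2 = 1 / (4 * \<kappa>)"
    using K\<kappa> \<open>0 < \<kappa>\<close> by (simp add: field_simps)
  also have "sqrt (1 / (4 * \<kappa>)) = 1 / (2 * sqrt \<kappa>)"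
    by (simp add: real_sqrt_divide real_sqrt_mult)
  finally show "(\<lambda>n. eta n * \<rho>^n / invsqrt_coeff n) \<longlonglongrightarrow> (1 - \<rho>) / (2 * sqrt \<kappa>)"
    using lim by (simp add: eval)
qed

lemma map_deg_carolina_div_asymptote:
  assumes "n \<ge> 1" "0 < \<rho>" "\<rho> < 1" "0 < \<kappa>"
  shows "map_deg carolina (Comp n) (Comp n) / ((1 - \<rho>) / sqrt (pi * \<kappa> * real n) * (1 / (2*\<rho>)) ^ n)
    = 2 * sqrt (pi * \<kappa>) / (1 - \<rho>) * (eta n * \<rho>^n / invsqrt_coeff n) * (invsqrt_coeff n * sqrt (real n))"
proof -
  have "(2::real) ^ n = 2 * 2 ^ (n - 1)" using assms(1) by (cases n) simp_all
  then show ?thesis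
    using assms invsqrt_coeff_pos[of n]
    by (simp add: map_deg_carolina real_sqrt_mult power_divide power_mult_distrib field_simps)
qed

theorem mainTheorem15:
  fixes \<rho> :: real
  assumes "0 < \<rho>" and "quartic \<rho> = 0"
    and "\<forall>x. 0 < x \<and> x < \<rho> \<longrightarrow> quartic x \<noteq> 0"
  shows "(\<forall>n\<ge>1. map_deg carolina (Comp n) (Comp n) = eta n / 2 ^ (n - 1))
    \<and> (\<lambda>n. map_deg carolina (Comp n) (Comp n)) \<sim>[at_top]
      (\<lambda>n. (1 - \<rho>) / sqrt (pi * (1 - 3*\<rho> + 2*\<rho>^2 - \<rho>^3) * real n) * (1 / (2*\<rho>)) ^ n)"
proof (intro conjI allI impI)
  show "map_deg carolina (Comp n) (Comp n) = eta n / 2 ^ (n - 1)" if "n \<ge> 1" for n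
    using that by (rule map_deg_carolina)
next
  define \<kappa> where "\<kappa> = 1 - 3*\<rho> + 2*\<rho>^2 - \<rho>^3"
  have \<kappa>: "0 < \<kappa>" and eta_lim: "(\<lambda>n. eta n * \<rho>^n / invsqrt_coeff n) \<longlonglongrightarrow> (1 - \<rho>) / (2 * sqrt \<kappa>)"
    using eta_asymptotics[OF assms] by (simp_all add: \<kappa>_def)
  have "\<rho> < 1" using smallest_quartic_root_bounds[OF assms] by simp
  define A where "A = 2 * sqrt (pi * \<kappa>) / (1 - \<rho>)"
  have "(\<lambda>n. A * (eta n * \<rho>^n / invsqrt_coeff n) * (invsqrt_coeff n * sqrt (real n)))
      \<longlonglongrightarrow> A * ((1 - \<rho>) / (2 * sqrt \<kappa>)) * (1 / sqrt pi)"
    by (intro tendsto_mult tendsto_const eta_lim invsqrt_coeff_asymp)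
  also have "A * ((1 - \<rho>) / (2 * sqrt \<kappa>)) * (1 / sqrt pi) = 1"
    using \<kappa> \<open>\<rho> < 1\<close> by (simp add: A_def real_sqrt_mult field_simps)
  finally have "(\<lambda>n. A * (eta n * \<rho>^n / invsqrt_coeff n) * (invsqrt_coeff n * sqrt (real n))) \<longlonglongrightarrow> 1" .
  moreover have "\<forall>\<^sub>F n in sequentially.
      A * (eta n * \<rho>^n / invsqrt_coeff n) * (invsqrt_coeff n * sqrt (real n))
      = map_deg carolina (Comp n) (Comp n) / ((1 - \<rho>) / sqrt (pi * \<kappa> * real n) * (1 / (2*\<rho>)) ^ n)"
    using eventually_ge_at_top[of 1] by eventually_elim
      (simp only: A_def map_deg_carolina_div_asymptote[OF _ assms(1) \<open>\<rho> < 1\<close> \<kappa>])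
  ultimately have "(\<lambda>n. map_deg carolina (Comp n) (Comp n) /
      ((1 - \<rho>) / sqrt (pi * \<kappa> * real n) * (1 / (2*\<rho>)) ^ n)) \<longlonglongrightarrow> 1"
    by (rule Lim_transform_eventually)
  then show "(\<lambda>n. map_deg carolina (Comp n) (Comp n)) \<sim>[at_top]
      (\<lambda>n. (1 - \<rho>) / sqrt (pi * (1 - 3*\<rho> + 2*\<rho>^2 - \<rho>^3) * real n) * (1 / (2*\<rho>)) ^ n)"
    unfolding \<kappa>_def by (rule asymp_equivI')
qed

end
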